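(* Let $\gamma$ and $\alpha$ be weak compositions of $m$ with $n$ parts and let $\sigma\in S_n$. Denote by $c_\gamma$ the coefficient of the monomial $x_{\sigma_1}^{\gamma_1}x_{\sigma_2}^{\gamma_2}\cdots x_{\sigma_n}^{\gamma_n}$ in $\mathrm{E}^\sigma_\alpha(\mathbf{x};q,t)$. Then $c_\gamma=0$ if $\mathrm{sort}(\gamma)>_{\mathrm{lex}}\mathrm{sort}(\alpha)$; $c_\gamma=0$ if $\mathrm{sort}(\gamma)=\mathrm{sort}(\alpha)$ and $\gamma>_{\mathrm{lex}}\alpha$; and $c_\gamma=1$ if $\gamma=\alpha$.
   Context: Fix $n\ge1$. A composition is $\alpha=(\alpha_1,\dots,\alpha_n)\in\mathbb{Z}_{\ge0}^n$; $\mathrm{sort}(\alpha)$ is the partition obtained by sorting the parts of $\alpha$ in weakly decreasing order, and $>_{\mathrm{lex}}$ is the lexicographic order comparing entries from left to right. Permutations $\sigma\in S_n$ are written in one-line notation $(\sigma_1,\dots,\sigma_n)$. Permuted-basement Macdonald polynomials: the augmented diagram of shape $\alpha$ has rows $r=1,\dots,n$ numbered top to bottom and columns numbered left to right starting from $0$; row $r$ consists of the basement box $(r,0)$ and the boxes $(r,c)$, $1\le c\le\alpha_r$. An augmented filling with basement $\sigma$ is a map $F$ from all boxes to $\{1,\dots,n\}$ with $F(r,0)=\sigma_r$. It is non-attacking if no two distinct boxes have equal entries while lying either in the same column, or in columns $c-1$ and $c$ with the box in column $c$ in a strictly lower row (larger row index) than the box in column $c-1$. Let $\mathrm{NAF}_\sigma(\alpha)$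 be the set of non-attacking such fillings. For a non-basement box $u=(r,c)$ put $d(u)=(r,c-1)$, $\mathrm{leg}(u)=\alpha_r-c$, and $\mathrm{arm}(u)=|\{r'>r: c\le\alpha_{r'}\le\alpha_r\}|+|\{r'<r: c-1\le\alpha_{r'}<\alpha_r\}|$. A non-basement box $u$ is a descent if $F(d(u))<F(u)$; $\mathrm{maj}(F)=\sum_{u\text{ descent}}(\mathrm{leg}(u)+1)$. A type A triple is a triple of boxes $a=(r,c-1)$, $b=(r,c)$, $e=(r',c)$ with $c\ge1$, $r'>r$, $c\le\alpha_{r'}\le\alpha_r$; a type B triple is $a=(r,c-1)$, $b=(r,c)$, $e=(r',c-1)$ with $c\ge1$, $r'<r$, $c-1\le\alpha_{r'}<\alpha_r$. Order the three boxes by their entries, breaking ties so that $a>e>b$; the triple is an inversion triple if $b<a<e$, $a<e<b$ or $e<b<a$ (for type A this means the boxes listed in increasing order go around counter-clockwise, for type B clockwise). $\mathrm{coinv}(F)$ is the number of type A and type B triples that are not inversion triples. Let $\mathbf{x}^F=\prod_{u\text{ non-basement}}x_{F(u)}$. Then $$\mathrm{E}^\sigma_\alpha(\mathbf{x};q,t)=\sum_{F\in\mathrm{NAF}_\sigma(\alpha)}\mathbf{x}^Fq^{\mathrm{maj}F}t^{\mathrm{coinv}F}\prod_{\substack{u\text{ non-basement}\\ F(u)\ne F(d(u))}}\frac{1-t}{1-q^{1+\mathrm{leg}(u)}t^{1+\mathrm{arm}(u)}}\in\mathbb{Q}(q,t)[x_1,\dots,x_n].$$ *)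

theory Defs
  imports "HOL-Library.Poly_Mapping" "HOL-Computational_Algebra.Fraction_Field"
    "HOL-Computational_Algebra.Polynomial" "HOL-Combinatorics.Multiset_Permutations"
begin

text \<open>Compositions and permutations are lists; the paper's 1-based entry alpha_r
  is the list entry at position r - 1. Boxes are pairs (row, column).\<close>

definition ent :: "nat list \<Rightarrow> nat \<Rightarrow> nat" where
  "ent xs r = xs ! (r - 1)"

definition boxes :: "nat list \<Rightarrow> (nat \<times> nat) set" where
  "boxes \<alpha> = {(r, c). 1 \<le> r \<and> r \<le> length \<alpha> \<and> c \<le> ent \<alpha> r}"

definition nonbasement :: "nat list \<Rightarrow> (nat \<times> nat) set" where
  "nonbasement \<alpha> = {(r, c). 1 \<le> r \<and> r \<le> length \<alpha> \<and> 1 \<le> c \<and> c \<le> ent \<alpha> r}"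

definition non_attacking :: "nat list \<Rightarrow> (nat \<times> nat \<Rightarrow> nat) \<Rightarrow> bool" where
  "non_attacking \<alpha> F \<longleftrightarrow>
     (\<forall>r r' c. (r, c) \<in> boxes \<alpha> \<and> (r', c) \<in> boxes \<alpha> \<and> r \<noteq> r' \<longrightarrow> F (r, c) \<noteq> F (r', c)) \<and>
     (\<forall>r r' c. (r, c) \<in> boxes \<alpha> \<and> (r', Suc c) \<in> boxes \<alpha> \<and> r < r' \<longrightarrow> F (r, c) \<noteq> F (r', Suc c))"

text \<open>Fillings are functions on all pairs, required to vanish outside the diagram
  (so that the set of fillings is the set of maps from boxes to {1..n}).\<close>
definition NAF :: "nat list \<Rightarrow> nat list \<Rightarrow> (nat \<times> nat \<Rightarrow> nat) set" where
  "NAF \<sigma> \<alpha> = {F. (\<forall>u. u \<notin> boxes \<alpha> \<longrightarrow> F u = 0) \<and>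
                 (\<forall>u \<in> boxes \<alpha>. F u \<in> {1..length \<alpha>}) \<and>
                 (\<forall>r \<in> {1..length \<alpha>}. F (r, 0) = ent \<sigma> r) \<and>
                 non_attacking \<alpha> F}"

definition leg :: "nat list \<Rightarrow> nat \<times> nat \<Rightarrow> nat" where
  "leg \<alpha> u = ent \<alpha> (fst u) - snd u"

definition arm :: "nat list \<Rightarrow> nat \<times> nat \<Rightarrow> nat" where
  "arm \<alpha> u = (let r = fst u; c = snd u in
     card {r'. r < r' \<and> r' \<le> length \<alpha> \<and> c \<le> ent \<alpha> r' \<and> ent \<alpha> r' \<le> ent \<alpha> r} +
     card {r'. 1 \<le> r' \<and> r' < r \<and> c - 1 \<le> ent \<alpha> r' \<and> ent \<alpha> r' < ent \<alpha> r})"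

definition dbox :: "nat \<times> nat \<Rightarrow> nat \<times> nat" where
  "dbox u = (fst u, snd u - 1)"

definition maj :: "nat list \<Rightarrow> (nat \<times> nat \<Rightarrow> nat) \<Rightarrow> nat" where
  "maj \<alpha> F = (\<Sum>u \<in> {u \<in> nonbasement \<alpha>. F (dbox u) < F u}. leg \<alpha> u + 1)"

text \<open>Boxes are compared by entry, ties broken so that a > e > b
  (ranks a = 2, e = 1, b = 0).\<close>
definition box_less :: "nat \<times> nat \<Rightarrow> nat \<times> nat \<Rightarrow> bool" where
  "box_less x y \<longleftrightarrow> fst x < fst y \<or> (fst x = fst y \<and> snd x < snd y)"

definition inv_triple :: "nat \<Rightarrow> nat \<Rightarrow> nat \<Rightarrow> bool" where
  "inv_triple fa fb fe \<longleftrightarrow> (let a = (fa, 2::nat); b = (fb, 0); e = (fe, 1) in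
     (box_less b a \<and> box_less a e) \<or> (box_less a e \<and> box_less e b) \<or> (box_less e b \<and> box_less b a))"

definition coinv :: "nat list \<Rightarrow> (nat \<times> nat \<Rightarrow> nat) \<Rightarrow> nat" where
  "coinv \<alpha> F =
     card {(r, c, r'). (r, c) \<in> nonbasement \<alpha> \<and> r < r' \<and> r' \<le> length \<alpha> \<and>
              c \<le> ent \<alpha> r' \<and> ent \<alpha> r' \<le> ent \<alpha> r \<and>
              \<not> inv_triple (F (r, c - 1)) (F (r, c)) (F (r', c))} +
     card {(r, c, r'). (r, c) \<in> nonbasement \<alpha> \<and> 1 \<le> r' \<and> r' < r \<and>
              c - 1 \<le> ent \<alpha> r' \<and> ent \<alpha> r' < ent \<alpha> r \<and>
              \<not> inv_triple (F (r, c - 1)) (F (r, c)) (F (r', c - 1))}"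

text \<open>The coefficient field Q(q,t) = fractions of rat poly poly; t is the outer
  polynomial variable, q the inner one.\<close>
type_synonym qt = "rat poly poly fract"

definition qvar :: qt where "qvar = Fraction_Field.Fract [:[:0, 1:]:] 1"
definition tvar :: qt where "tvar = Fraction_Field.Fract [:0, 1:] 1"

definition weight :: "nat list \<Rightarrow> (nat \<times> nat \<Rightarrow> nat) \<Rightarrow> qt" where
  "weight \<alpha> F = qvar ^ maj \<alpha> F * tvar ^ coinv \<alpha> F *
     (\<Prod>u \<in> {u \<in> nonbasement \<alpha>. F u \<noteq> F (dbox u)}.
        (1 - tvar) / (1 - qvar ^ (1 + leg \<alpha> u) * tvar ^ (1 + arm \<alpha> u)))"

definition xexp :: "nat list \<Rightarrow> (nat \<times> nat \<Rightarrow> nat) \<Rightarrow> (nat \<Rightarrow>\<^sub>0 nat)" where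
  "xexp \<alpha> F = (\<Sum>u \<in> nonbasement \<alpha>. Poly_Mapping.single (F u) 1)"

definition Emac :: "nat list \<Rightarrow> nat list \<Rightarrow> (nat \<Rightarrow>\<^sub>0 nat) \<Rightarrow>\<^sub>0 qt" where
  "Emac \<sigma> \<alpha> = (\<Sum>F \<in> NAF \<sigma> \<alpha>. Poly_Mapping.single (xexp \<alpha> F) (weight \<alpha> F))"

definition mon_exp :: "nat list \<Rightarrow> nat list \<Rightarrow> (nat \<Rightarrow>\<^sub>0 nat)" where
  "mon_exp \<sigma> \<gamma> = (\<Sum>i < length \<gamma>. Poly_Mapping.single (\<sigma> ! i) (\<gamma> ! i))"

definition sortp :: "nat list \<Rightarrow> nat list" where
  "sortp xs = rev (sort xs)"

definition lex_gt :: "nat list \<Rightarrow> nat list \<Rightarrow> bool" where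
  "lex_gt xs ys \<longleftrightarrow> (\<exists>i < min (length xs) (length ys).
       take i xs = take i ys \<and> xs ! i > ys ! i)"

end

theory Submission
  imports Defs
begin

text \<open>In a non-attacking filling a value occurs at most once per column. Hence if
  \<open>\<sigma>\<^sub>i\<close> occurs \<open>\<gamma>\<^sub>i\<close> times, at least \<open>\<gamma>\<^sub>i - x\<close> of these occurrences lie beyond column \<open>x\<close>,
  and summing over \<open>i\<close> gives \<open>\<Sum>(\<gamma>\<^sub>i - x)\<^sup>+ \<le> \<Sum>(\<alpha>\<^sub>i - x)\<^sup>+\<close> for every \<open>x\<close>, which is
  impossible if \<open>sort \<gamma> >\<^sub>l\<^sub>e\<^sub>x sort \<alpha>\<close>. If \<open>sort \<gamma> = sort \<alpha>\<close> all these bounds are tight, so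
  \<open>\<sigma>\<^sub>i\<close> occupies exactly the columns \<open>1..\<gamma>\<^sub>i\<close>; the non-attacking condition between
  adjacent columns then keeps every occurrence of \<open>\<sigma>\<^sub>i\<close> in the rows \<open>\<le> i\<close>. Counting the
  boxes beyond column \<open>\<gamma>\<^sub>p - 1\<close> in the rows \<open>\<le> p\<close>, where \<open>p\<close> is the first position with
  \<open>\<gamma>\<^sub>p > \<alpha>\<^sub>p\<close>, gives a contradiction. For \<open>\<gamma> = \<alpha>\<close> the same rigidity leaves only the
  filling whose rows repeat their basement entry, and it has weight 1.\<close>

definition excess :: "nat list \<Rightarrow> nat \<Rightarrow> nat" where
  "excess xs x = sum_list (map (\<lambda>a. a - x) xs)"

lemma excess_eq_sum_ent: "excess xs x = (\<Sum>i\<in>{1..length xs}. ent xs i - x)"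
proof -
  have "excess xs x = (\<Sum>j\<in>{0..<length xs}. xs ! j - x)"
    unfolding excess_def by (simp add: sum_list_sum_nth)
  also have "\<dots> = (\<Sum>i\<in>{1..length xs}. ent xs i - x)"
    by (rule sum.reindex_bij_witness[of _ "\<lambda>i. i - 1" Suc]) (auto simp: ent_def)
  finally show ?thesis .
qed

lemma excess_mset_cong: "mset xs = mset ys \<Longrightarrow> excess xs x = excess ys x"
  unfolding excess_def by (metis mset_map sum_mset_sum_list)

lemma excess_sortp: "excess (sortp xs) x = excess xs x"
  by (rule excess_mset_cong) (simp add: sortp_def)

lemma excess_less_if_lex_gt_sorted:
  assumes "length ys = length zs" and "sorted (rev zs)" and "lex_gt ys zs"
  shows "\<exists>x. excess zs x < excess ys x"
proof -
  obtain i where i: "i < length zs" "take i ys = take i zs" "ys ! i > zs ! i"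
    using assms(1,3) unfolding lex_gt_def by auto
  let ?x = "zs ! i"
  have ys: "ys = take i ys @ ys ! i # drop (Suc i) ys"
    using i(1) assms(1) by (simp add: id_take_nth_drop)
  have zs: "zs = take i zs @ zs ! i # drop (Suc i) zs"
    using i(1) by (simp add: id_take_nth_drop)
  have "a \<le> ?x" if "a \<in> set (drop (Suc i) zs)" for a
    using that sorted_rev_nth_mono[OF assms(2), of i] by (auto simp: in_set_conv_nth)
  then have tail: "excess (drop (Suc i) zs) ?x = 0"
    unfolding excess_def by (simp add: sum_list_eq_0_iff)
  have "excess zs ?x = excess (take i zs) ?x + excess (drop (Suc i) zs) ?x"
    by (subst zs) (simp add: excess_def)
  also have "\<dots> = excess (take i ys) ?x" using tail i(2) by simp
  also have "\<dots> < excess (take i ys) ?x + (ys ! i - ?x) + excess (drop (Suc i) ys) ?x"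
    using i(3) by simp
  also have "\<dots> = excess ys ?x" by (subst (3) ys) (simp add: excess_def)
  finally show ?thesis by blast
qed

lemma finite_nonbasement [simp]: "finite (nonbasement \<alpha>)"
proof -
  have "nonbasement \<alpha> = Sigma {1..length \<alpha>} (\<lambda>r. {1..ent \<alpha> r})"
    unfolding nonbasement_def by auto
  then show ?thesis by simp
qed

lemma nonbasement_subset_boxes: "nonbasement \<alpha> \<subseteq> boxes \<alpha>"
  unfolding nonbasement_def boxes_def by auto

lemma card_nonbasement_beyond:
  assumes "R \<subseteq> {1..length \<alpha>}"
  shows "card {u \<in> nonbasement \<alpha>. fst u \<in> R \<and> x < snd u} = (\<Sum>r\<in>R. ent \<alpha> r - x)"
proof -
  have "{u \<in> nonbasement \<alpha>. fst u \<in> R \<and> x < snd u} = Sigma R (\<lambda>r. {x<..ent \<alpha> r})"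
    using assms unfolding nonbasement_def by auto
  then show ?thesis using assms by (simp add: finite_subset)
qed

lemma lookup_xexp: "Poly_Mapping.lookup (xexp \<alpha> F) v = card {u \<in> nonbasement \<alpha>. F u = v}"
  unfolding xexp_def lookup_sum lookup_single
  by (simp add: when_def sum.If_cases Collect_conj_eq)

lemma finite_NAF: "finite (NAF \<sigma> \<alpha>)"
proof (rule finite_subset)
  let ?B = "{f. \<forall>u. (u \<in> boxes \<alpha> \<longrightarrow> f u \<in> {1..length \<alpha>}) \<and> (u \<notin> boxes \<alpha> \<longrightarrow> f u = 0)}"
  show "NAF \<sigma> \<alpha> \<subseteq> ?B" unfolding NAF_def by auto
  have "boxes \<alpha> = Sigma {1..length \<alpha>} (\<lambda>r. {0..ent \<alpha> r})"
    unfolding boxes_def by auto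
  then show "finite ?B" by (intro finite_set_of_finite_funs) simp_all
qed

lemma lookup_Emac:
  "Poly_Mapping.lookup (Emac \<sigma> \<alpha>) e = (\<Sum>F\<in>NAF \<sigma> \<alpha>. weight \<alpha> F when xexp \<alpha> F = e)"
  unfolding Emac_def lookup_sum lookup_single by simp

lemma lookup_Emac_eq_0I:
  "(\<And>F. F \<in> NAF \<sigma> \<alpha> \<Longrightarrow> xexp \<alpha> F \<noteq> e) \<Longrightarrow> Poly_Mapping.lookup (Emac \<sigma> \<alpha>) e = 0"
  unfolding lookup_Emac by (intro sum.neutral) (auto simp: when_def)

lemma inv_triple_same: "s \<noteq> t \<Longrightarrow> inv_triple s s t"
  unfolding inv_triple_def box_less_def by auto

locale basement_perm =
  fixes \<sigma> \<alpha> :: "nat list"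
  assumes set_basement: "set \<sigma> = {1..length \<alpha>}" and distinct_basement: "distinct \<sigma>"
begin

lemma length_basement: "length \<sigma> = length \<alpha>"
  using set_basement distinct_basement by (metis card_atLeastAtMost diff_Suc_1 distinct_card)

lemma inj_on_ent_basement: "inj_on (ent \<sigma>) {1..length \<alpha>}"
proof (rule inj_onI)
  fix i j assume "i \<in> {1..length \<alpha>}" "j \<in> {1..length \<alpha>}" "ent \<sigma> i = ent \<sigma> j"
  then have "i - 1 = j - 1"
    using nth_eq_iff_index_eq[OF distinct_basement, of "i - 1" "j - 1"] length_basement
    unfolding ent_def by auto
  then show "i = j" using \<open>i \<in> {1..length \<alpha>}\<close> \<open>j \<in> {1..length \<alpha>}\<close> by auto
qed

lemma image_ent_basement: "ent \<sigma> ` {1..length \<alpha>} = {1..length \<alpha>}"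
proof -
  have "ent \<sigma> ` {1..length \<sigma>} = set \<sigma>"
  proof
    show "ent \<sigma> ` {1..length \<sigma>} \<subseteq> set \<sigma>" by (auto simp: ent_def)
    show "set \<sigma> \<subseteq> ent \<sigma> ` {1..length \<sigma>}"
    proof
      fix v assume "v \<in> set \<sigma>"
      then obtain j where "j < length \<sigma>" "v = \<sigma> ! j" by (auto simp: in_set_conv_nth)
      then show "v \<in> ent \<sigma> ` {1..length \<sigma>}"
        by (intro image_eqI[of _ _ "Suc j"]) (auto simp: ent_def)
    qed
  qed
  then show ?thesis using set_basement length_basement by simp
qed

lemma lookup_mon_exp_ent:
  assumes "length \<gamma> = length \<alpha>" and "i \<in> {1..length \<alpha>}"
  shows "Poly_Mapping.lookup (mon_exp \<sigma> \<gamma>) (ent \<sigma> i) = ent \<gamma> i"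
proof -
  have "(\<gamma> ! j when \<sigma> ! j = ent \<sigma> i) = (if j = i - 1 then \<gamma> ! j else 0)"
    if "j < length \<gamma>" for j
    using that nth_eq_iff_index_eq[OF distinct_basement] length_basement assms
    by (auto simp: ent_def when_def)
  then have "Poly_Mapping.lookup (mon_exp \<sigma> \<gamma>) (ent \<sigma> i) = (\<Sum>j<length \<gamma>. if j = i - 1 then \<gamma> ! j else 0)"
    unfolding mon_exp_def lookup_sum lookup_single by (auto intro!: sum.cong)
  also have "\<dots> = ent \<gamma> i" using assms by (simp add: ent_def; linarith)
  finally show ?thesis .
qed

lemma lookup_mon_exp_eq_0:
  assumes "length \<gamma> = length \<alpha>" and "v \<notin> {1..length \<alpha>}"
  shows "Poly_Mapping.lookup (mon_exp \<sigma> \<gamma>) v = 0"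
proof -
  have "\<sigma> ! j \<noteq> v" if "j < length \<gamma>" for j
    using that assms nth_mem[of j \<sigma>] set_basement length_basement by auto
  then show ?thesis unfolding mon_exp_def lookup_sum lookup_single by (simp add: when_def)
qed

end

locale nonattacking_filling = basement_perm +
  fixes F :: "nat \<times> nat \<Rightarrow> nat"
  assumes NAF: "F \<in> NAF \<sigma> \<alpha>"
begin

lemma filling_outside: "u \<notin> boxes \<alpha> \<Longrightarrow> F u = 0"
  using NAF unfolding NAF_def by blast

lemma filling_basement: "r \<in> {1..length \<alpha>} \<Longrightarrow> F (r, 0) = ent \<sigma> r"
  using NAF unfolding NAF_def by auto

lemma filling_column_inj:
  "(r, c) \<in> boxes \<alpha> \<Longrightarrow> (r', c) \<in> boxes \<alpha> \<Longrightarrow> F (r, c) = F (r', c) \<Longrightarrow> r = r'"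
  using NAF unfolding NAF_def non_attacking_def by blast

lemma filling_adjacent_le:
  assumes "(r, c) \<in> boxes \<alpha>" and "(r', Suc c) \<in> boxes \<alpha>" and "F (r, c) = F (r', Suc c)"
  shows "r' \<le> r"
proof (rule ccontr)
  assume "\<not> r' \<le> r"
  with assms NAF show False unfolding NAF_def non_attacking_def by (simp add: not_le)
qed

definition occ_beyond :: "nat \<Rightarrow> nat \<Rightarrow> (nat \<times> nat) set" where
  "occ_beyond v x = {u \<in> nonbasement \<alpha>. F u = v \<and> x < snd u}"

lemma finite_occ_beyond [simp]: "finite (occ_beyond v x)"
  unfolding occ_beyond_def by simp

lemma card_occ_beyond_ge:
  "card {u \<in> nonbasement \<alpha>. F u = v} - x \<le> card (occ_beyond v x)"
proof -
  let ?near = "{u \<in> nonbasement \<alpha>. F u = v \<and> snd u \<le> x}"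
  have "{u \<in> nonbasement \<alpha>. F u = v} = ?near \<union> occ_beyond v x"
    unfolding occ_beyond_def by auto
  then have "card {u \<in> nonbasement \<alpha>. F u = v} \<le> card ?near + card (occ_beyond v x)"
    using card_Un_le[of ?near "occ_beyond v x"] by simp
  moreover have "card ?near \<le> card {1..x}"
  proof (rule card_inj_on_le)
    show "inj_on snd ?near"
    proof (rule inj_onI)
      fix u u' assume "u \<in> ?near" "u' \<in> ?near" "snd u = snd u'"
      moreover obtain r c r' c' where "u = (r, c)" "u' = (r', c')" by fastforce
      ultimately show "u = u'"
        using filling_column_inj[of r c r'] nonbasement_subset_boxes by auto
    qed
    show "snd ` ?near \<subseteq> {1..x}" unfolding nonbasement_def by auto
  qed simp
  ultimately show ?thesis by simp
qed

lemma sum_card_occ_beyond_le: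
  assumes "I \<subseteq> {1..length \<alpha>}" and "finite B" and "\<forall>i\<in>I. occ_beyond (ent \<sigma> i) x \<subseteq> B"
  shows "(\<Sum>i\<in>I. card (occ_beyond (ent \<sigma> i) x)) \<le> card B"
proof -
  have "finite I" using assms(1) finite_subset by blast
  moreover have "inj_on (ent \<sigma>) I" using inj_on_ent_basement assms(1) by (rule inj_on_subset)
  ultimately have "card (\<Union>i\<in>I. occ_beyond (ent \<sigma> i) x) = (\<Sum>i\<in>I. card (occ_beyond (ent \<sigma> i) x))"
    by (intro card_UN_disjoint) (auto simp: occ_beyond_def inj_on_eq_iff)
  moreover have "card (\<Union>i\<in>I. occ_beyond (ent \<sigma> i) x) \<le> card B"
    using assms(2,3) by (intro card_mono) auto
  ultimately show ?thesis by simp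
qed

lemma sum_card_occ_beyond_le_excess:
  "(\<Sum>i\<in>{1..length \<alpha>}. card (occ_beyond (ent \<sigma> i) x)) \<le> excess \<alpha> x"
proof -
  let ?N = "{1..length \<alpha>}"
  have "(\<Sum>i\<in>?N. card (occ_beyond (ent \<sigma> i) x)) \<le> card {u \<in> nonbasement \<alpha>. fst u \<in> ?N \<and> x < snd u}"
  proof (rule sum_card_occ_beyond_le)
    show "\<forall>i\<in>?N. occ_beyond (ent \<sigma> i) x \<subseteq> {u \<in> nonbasement \<alpha>. fst u \<in> ?N \<and> x < snd u}"
      by (auto simp: occ_beyond_def nonbasement_def)
  next
    show "finite {u \<in> nonbasement \<alpha>. fst u \<in> ?N \<and> x < snd u}" by simp
  qed simp
  also have "\<dots> = excess \<alpha> x" using card_nonbasement_beyond[of ?N] excess_eq_sum_ent by simp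
  finally show ?thesis .
qed

end

definition basic_filling :: "nat list \<Rightarrow> nat list \<Rightarrow> nat \<times> nat \<Rightarrow> nat" where
  "basic_filling \<sigma> \<alpha> u = (if u \<in> boxes \<alpha> then ent \<sigma> (fst u) else 0)"

locale filling_of_content = nonattacking_filling +
  fixes \<gamma> :: "nat list"
  assumes length_content: "length \<gamma> = length \<alpha>" and xexp_filling: "xexp \<alpha> F = mon_exp \<sigma> \<gamma>"
begin

lemma card_occurrences:
  "i \<in> {1..length \<alpha>} \<Longrightarrow> card {u \<in> nonbasement \<alpha>. F u = ent \<sigma> i} = ent \<gamma> i"
  using lookup_xexp[of \<alpha> F "ent \<sigma> i"] lookup_mon_exp_ent[OF length_content] xexp_filling by simp

lemma card_occ_beyond_content_ge:
  "i \<in> {1..length \<alpha>} \<Longrightarrow> ent \<gamma> i - x \<le> card (occ_beyond (ent \<sigma> i) x)"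
  using card_occ_beyond_ge[of "ent \<sigma> i" x] by (simp add: card_occurrences)

lemma excess_content_le: "excess \<gamma> x \<le> excess \<alpha> x"
proof -
  have "excess \<gamma> x = (\<Sum>i\<in>{1..length \<alpha>}. ent \<gamma> i - x)"
    using excess_eq_sum_ent length_content by simp
  also have "\<dots> \<le> (\<Sum>i\<in>{1..length \<alpha>}. card (occ_beyond (ent \<sigma> i) x))"
    using card_occ_beyond_content_ge by (rule sum_mono)
  also have "\<dots> \<le> excess \<alpha> x" by (rule sum_card_occ_beyond_le_excess)
  finally show ?thesis .
qed

lemma not_lex_gt_sortp: "\<not> lex_gt (sortp \<gamma>) (sortp \<alpha>)"
proof
  assume "lex_gt (sortp \<gamma>) (sortp \<alpha>)"
  moreover have "length (sortp \<gamma>) = length (sortp \<alpha>)" "sorted (rev (sortp \<alpha>))"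
    using length_content by (simp_all add: sortp_def)
  ultimately obtain x where "excess (sortp \<alpha>) x < excess (sortp \<gamma>) x"
    using excess_less_if_lex_gt_sorted by blast
  then show False using excess_content_le[of x] by (simp add: excess_sortp)
qed

context
  assumes same_parts: "mset \<gamma> = mset \<alpha>"
begin

lemma card_occ_beyond_eq:
  assumes "i \<in> {1..length \<alpha>}"
  shows "card (occ_beyond (ent \<sigma> i) x) = ent \<gamma> i - x"
proof -
  let ?N = "{1..length \<alpha>}"
  have "(\<Sum>i\<in>?N. card (occ_beyond (ent \<sigma> i) x)) \<le> excess \<gamma> x"
    using sum_card_occ_beyond_le_excess excess_mset_cong[OF same_parts] by simp
  also have "\<dots> = (\<Sum>i\<in>?N. ent \<gamma> i - x)" using excess_eq_sum_ent length_content by simp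
  finally have le: "(\<Sum>i\<in>?N. card (occ_beyond (ent \<sigma> i) x)) \<le> (\<Sum>i\<in>?N. ent \<gamma> i - x)" .
  have "(\<Sum>i\<in>?N. ent \<gamma> i - x) \<le> (\<Sum>i\<in>?N. card (occ_beyond (ent \<sigma> i) x))"
    using card_occ_beyond_content_ge by (rule sum_mono)
  with le have "(\<Sum>i\<in>?N. ent \<gamma> i - x) = (\<Sum>i\<in>?N. card (occ_beyond (ent \<sigma> i) x))"
    by (rule antisym[rotated])
  from sum_mono_inv[OF this card_occ_beyond_content_ge assms] show ?thesis by simp
qed

lemma occurs_in_column_iff:
  assumes i: "i \<in> {1..length \<alpha>}" and c: "1 \<le> c"
  shows "(\<exists>r. (r, c) \<in> nonbasement \<alpha> \<and> F (r, c) = ent \<sigma> i) \<longleftrightarrow> c \<le> ent \<gamma> i"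
proof -
  let ?E = "{u \<in> nonbasement \<alpha>. F u = ent \<sigma> i \<and> snd u = c}"
  have "occ_beyond (ent \<sigma> i) (c - 1) = occ_beyond (ent \<sigma> i) c \<union> ?E"
    and "occ_beyond (ent \<sigma> i) c \<inter> ?E = {}"
    using c unfolding occ_beyond_def by auto
  then have "card (occ_beyond (ent \<sigma> i) (c - 1)) = card (occ_beyond (ent \<sigma> i) c) + card ?E"
    by (simp add: card_Un_disjoint)
  then have "card ?E = (ent \<gamma> i - (c - 1)) - (ent \<gamma> i - c)"
    unfolding card_occ_beyond_eq[OF i] by simp
  then have "card ?E \<noteq> 0 \<longleftrightarrow> c \<le> ent \<gamma> i"
    using c by arith
  then show ?thesis by (force simp: card_eq_0_iff)
qed

text \<open>An occurrence of \<open>\<sigma>\<^sub>i\<close> in column \<open>c + 1\<close> lies weakly above the one in column \<open>c\<close>,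
  which exists by the previous lemma; induction on \<open>c\<close> starts at the basement box \<open>(i, 0)\<close>.\<close>
lemma occurs_in_row_le:
  assumes i: "i \<in> {1..length \<alpha>}"
  shows "(r, c) \<in> boxes \<alpha> \<Longrightarrow> F (r, c) = ent \<sigma> i \<Longrightarrow> r \<le> i"
proof (induction c arbitrary: r)
  case 0
  then have r: "r \<in> {1..length \<alpha>}" unfolding boxes_def by auto
  then have "ent \<sigma> r = ent \<sigma> i" using filling_basement 0(2) by simp
  then show ?case using inj_onD[OF inj_on_ent_basement _ r i] by simp
next
  case (Suc c)
  then have "(r, Suc c) \<in> nonbasement \<alpha>" unfolding boxes_def nonbasement_def by auto
  then have "Suc c \<le> ent \<gamma> i"
    using occurs_in_column_iff[OF i, of "Suc c"] Suc.prems(2) by auto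
  obtain r0 where r0: "(r0, c) \<in> boxes \<alpha>" "F (r0, c) = ent \<sigma> i"
  proof (cases "c = 0")
    case True
    then show ?thesis
      using that[of i] i filling_basement[OF i] unfolding boxes_def by simp
  next
    case False
    then obtain r0 where "(r0, c) \<in> nonbasement \<alpha>" "F (r0, c) = ent \<sigma> i"
      using occurs_in_column_iff[OF i, of c] \<open>Suc c \<le> ent \<gamma> i\<close> by auto
    then show ?thesis using that nonbasement_subset_boxes by blast
  qed
  have "r \<le> r0" using filling_adjacent_le[OF r0(1) Suc.prems(1)] r0(2) Suc.prems(2) by simp
  also have "r0 \<le> i" using Suc.IH r0 by blast
  finally show ?case .
qed

lemma sum_initial_content_le:
  assumes k: "k \<le> length \<alpha>"
  shows "(\<Sum>i\<in>{1..k}. ent \<gamma> i - x) \<le> (\<Sum>i\<in>{1..k}. ent \<alpha> i - x)"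
proof -
  let ?R = "{1..k}"
  have R: "?R \<subseteq> {1..length \<alpha>}" using k by auto
  have "(\<Sum>i\<in>?R. ent \<gamma> i - x) = (\<Sum>i\<in>?R. card (occ_beyond (ent \<sigma> i) x))"
    using R card_occ_beyond_eq by (intro sum.cong) auto
  also have "\<dots> \<le> card {u \<in> nonbasement \<alpha>. fst u \<in> ?R \<and> x < snd u}"
  proof (rule sum_card_occ_beyond_le[OF R])
    show "\<forall>i\<in>?R. occ_beyond (ent \<sigma> i) x \<subseteq> {u \<in> nonbasement \<alpha>. fst u \<in> ?R \<and> x < snd u}"
    proof (intro ballI subsetI)
      fix i u assume i: "i \<in> ?R" and "u \<in> occ_beyond (ent \<sigma> i) x"
      moreover obtain r c where u: "u = (r, c)" by fastforce
      ultimately have rc: "(r, c) \<in> nonbasement \<alpha>" "F (r, c) = ent \<sigma> i" "x < c"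
        unfolding occ_beyond_def by auto
      then have "r \<le> i" using occurs_in_row_le[of i r c] i R nonbasement_subset_boxes by auto
      with rc i show "u \<in> {u \<in> nonbasement \<alpha>. fst u \<in> ?R \<and> x < snd u}"
        unfolding u nonbasement_def by auto
    qed
  next
    show "finite {u \<in> nonbasement \<alpha>. fst u \<in> ?R \<and> x < snd u}" by simp
  qed
  also have "\<dots> = (\<Sum>i\<in>?R. ent \<alpha> i - x)" using card_nonbasement_beyond[OF R] .
  finally show ?thesis .
qed

lemma not_lex_gt: "\<not> lex_gt \<gamma> \<alpha>"
proof
  assume "lex_gt \<gamma> \<alpha>"
  then obtain p where p: "p < length \<alpha>" "take p \<gamma> = take p \<alpha>" "\<gamma> ! p > \<alpha> ! p"
    unfolding lex_gt_def using length_content by auto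
  define x where "x = \<gamma> ! p - 1"
  have "ent \<gamma> i = ent \<alpha> i" if "i \<in> {1..p}" for i
    using that p(2) nth_take[of "i - 1" p \<gamma>] nth_take[of "i - 1" p \<alpha>] by (auto simp: ent_def)
  then have "(\<Sum>i\<in>{1..p}. ent \<gamma> i - x) = (\<Sum>i\<in>{1..p}. ent \<alpha> i - x)"
    by simp
  moreover have "ent \<gamma> (Suc p) - x = 1" "ent \<alpha> (Suc p) - x = 0"
    using p(3) unfolding x_def ent_def by auto
  ultimately show False using sum_initial_content_le[of "Suc p" x] p(1) by simp
qed

lemma eq_basic_filling:
  assumes "\<gamma> = \<alpha>"
  shows "F = basic_filling \<sigma> \<alpha>"
proof -
  have rows: "F (r, c) = ent \<sigma> r" if "r \<in> {1..length \<alpha>}" "1 \<le> c" "c \<le> ent \<alpha> r" for r c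
    using that
  proof (induction r arbitrary: c rule: less_induct)
    case (less r)
    then obtain r1 where r1: "(r1, c) \<in> nonbasement \<alpha>" "F (r1, c) = ent \<sigma> r"
      using occurs_in_column_iff[OF less.prems(1,2)] assms by auto
    then have r1N: "r1 \<in> {1..length \<alpha>}" "c \<le> ent \<alpha> r1" unfolding nonbasement_def by auto
    have "r1 \<le> r" using occurs_in_row_le[OF less.prems(1)] r1 nonbasement_subset_boxes by blast
    moreover have "\<not> r1 < r"
    proof
      assume "r1 < r"
      then have "ent \<sigma> r1 = ent \<sigma> r" using less.IH[OF _ r1N(1) less.prems(2) r1N(2)] r1(2) by simp
      then have "r1 = r" using inj_onD[OF inj_on_ent_basement _ r1N(1) less.prems(1)] by simp
      with \<open>r1 < r\<close> show False by simp
    qed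
    ultimately show ?case using r1(2) by (simp add: not_less order_antisym)
  qed
  show ?thesis
  proof
    fix u :: "nat \<times> nat"
    obtain r c where u: "u = (r, c)" by fastforce
    show "F u = basic_filling \<sigma> \<alpha> u"
    proof (cases "u \<in> boxes \<alpha>")
      case True
      then have "r \<in> {1..length \<alpha>}" "c \<le> ent \<alpha> r" unfolding u boxes_def by auto
      with True show ?thesis
        using rows filling_basement unfolding u basic_filling_def by (cases "c = 0") auto
    next
      case False
      then show ?thesis using filling_outside by (simp add: basic_filling_def)
    qed
  qed
qed

end

end

context basement_perm
begin

lemma basic_filling_NAF: "basic_filling \<sigma> \<alpha> \<in> NAF \<sigma> \<alpha>"
proof -
  have "ent \<sigma> r \<in> {1..length \<alpha>}" if "r \<in> {1..length \<alpha>}" for r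
    using that image_ent_basement by blast
  moreover have "ent \<sigma> r \<noteq> ent \<sigma> r'" if "r \<in> {1..length \<alpha>}" "r' \<in> {1..length \<alpha>}" "r \<noteq> r'" for r r'
    using that inj_on_ent_basement by (meson inj_onD)
  ultimately show ?thesis
    unfolding NAF_def non_attacking_def basic_filling_def boxes_def by auto
qed

lemma xexp_basic_filling: "xexp \<alpha> (basic_filling \<sigma> \<alpha>) = mon_exp \<sigma> \<alpha>"
proof (rule poly_mapping_eqI)
  fix v
  show "Poly_Mapping.lookup (xexp \<alpha> (basic_filling \<sigma> \<alpha>)) v = Poly_Mapping.lookup (mon_exp \<sigma> \<alpha>) v"
  proof (cases "v \<in> {1..length \<alpha>}")
    case True
    then obtain i where i: "i \<in> {1..length \<alpha>}" "v = ent \<sigma> i" using image_ent_basement by blast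
    have "basic_filling \<sigma> \<alpha> u = ent \<sigma> i \<longleftrightarrow> fst u = i" if "u \<in> nonbasement \<alpha>" for u
      using that i(1) nonbasement_subset_boxes inj_on_ent_basement
      unfolding basic_filling_def nonbasement_def by (auto simp: inj_on_eq_iff)
    then have "{u \<in> nonbasement \<alpha>. basic_filling \<sigma> \<alpha> u = ent \<sigma> i} = {u \<in> nonbasement \<alpha>. fst u = i}"
      by blast
    also have "\<dots> = {i} \<times> {1..ent \<alpha> i}" using i(1) unfolding nonbasement_def by auto
    finally have "{u \<in> nonbasement \<alpha>. basic_filling \<sigma> \<alpha> u = ent \<sigma> i} = {i} \<times> {1..ent \<alpha> i}" .
    then show ?thesis using lookup_xexp lookup_mon_exp_ent[OF refl i(1)] i(2) by simp
  next
    case False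
    then have "{u \<in> nonbasement \<alpha>. basic_filling \<sigma> \<alpha> u = v} = {}"
      using basic_filling_NAF nonbasement_subset_boxes unfolding NAF_def by blast
    then show ?thesis using lookup_xexp lookup_mon_exp_eq_0[OF refl False] by simp
  qed
qed

lemma weight_basic_filling: "weight \<alpha> (basic_filling \<sigma> \<alpha>) = 1"
proof -
  let ?F = "basic_filling \<sigma> \<alpha>"
  have rows: "?F (dbox u) = ?F u" if "u \<in> nonbasement \<alpha>" for u
    using that unfolding nonbasement_def boxes_def basic_filling_def dbox_def by auto
  have no_inversion: "inv_triple (?F (r, c - 1)) (?F (r, c)) (?F (r', c'))"
    if "1 \<le> r" "r \<le> length \<alpha>" "1 \<le> c" "c \<le> ent \<alpha> r"
      and "1 \<le> r'" "r' \<le> length \<alpha>" "c' \<le> ent \<alpha> r'" "r' \<noteq> r" for r c r' c'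
  proof -
    have "ent \<sigma> r \<noteq> ent \<sigma> r'" using that inj_on_ent_basement by (auto simp: inj_on_eq_iff)
    then show ?thesis using that inv_triple_same unfolding basic_filling_def boxes_def by auto
  qed
  have coinv: "coinv \<alpha> ?F = card ({} :: (nat \<times> nat \<times> nat) set) + card ({} :: (nat \<times> nat \<times> nat) set)"
    unfolding coinv_def using no_inversion
    by (intro arg_cong2[where f = "(+)"] arg_cong[where f = card]) (auto simp: nonbasement_def)
  have maj: "maj \<alpha> ?F = 0" unfolding maj_def using rows by simp
  have no_descent: "{u \<in> nonbasement \<alpha>. ?F u \<noteq> ?F (dbox u)} = {}" using rows by auto
  show ?thesis unfolding weight_def coinv maj no_descent by simp
qed

lemma filling_of_contentI:
  "F \<in> NAF \<sigma> \<alpha> \<Longrightarrow> length \<gamma> = length \<alpha> \<Longrightarrow> xexp \<alpha> F = mon_exp \<sigma> \<gamma> \<Longrightarrow>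
    filling_of_content \<sigma> \<alpha> F \<gamma>"
  by unfold_locales

lemma lookup_Emac_eq_0_if_lex_gt_sortp:
  assumes "length \<gamma> = length \<alpha>" and "lex_gt (sortp \<gamma>) (sortp \<alpha>)"
  shows "Poly_Mapping.lookup (Emac \<sigma> \<alpha>) (mon_exp \<sigma> \<gamma>) = 0"
proof (rule lookup_Emac_eq_0I)
  show "xexp \<alpha> F \<noteq> mon_exp \<sigma> \<gamma>" if "F \<in> NAF \<sigma> \<alpha>" for F
    using that assms filling_of_contentI filling_of_content.not_lex_gt_sortp by metis
qed

lemma lookup_Emac_eq_0_if_lex_gt:
  assumes "length \<gamma> = length \<alpha>" and "sortp \<gamma> = sortp \<alpha>" and "lex_gt \<gamma> \<alpha>"
  shows "Poly_Mapping.lookup (Emac \<sigma> \<alpha>) (mon_exp \<sigma> \<gamma>) = 0"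
proof (rule lookup_Emac_eq_0I)
  have "mset \<gamma> = mset \<alpha>" using assms(2) unfolding sortp_def by (metis mset_rev mset_sort)
  then show "xexp \<alpha> F \<noteq> mon_exp \<sigma> \<gamma>" if "F \<in> NAF \<sigma> \<alpha>" for F
    using that assms(1,3) filling_of_contentI filling_of_content.not_lex_gt by metis
qed

lemma lookup_Emac_mon_exp_self: "Poly_Mapping.lookup (Emac \<sigma> \<alpha>) (mon_exp \<sigma> \<alpha>) = 1"
proof -
  have "(weight \<alpha> F when xexp \<alpha> F = mon_exp \<sigma> \<alpha>) = (if F = basic_filling \<sigma> \<alpha> then 1 else 0)"
    if "F \<in> NAF \<sigma> \<alpha>" for F
    using that filling_of_contentI[OF that] filling_of_content.eq_basic_filling
      xexp_basic_filling weight_basic_filling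
    by (fastforce simp: when_def)
  then show ?thesis
    unfolding lookup_Emac using finite_NAF basic_filling_NAF by simp
qed

end

theorem mainTheorem1:
  fixes n m :: nat and \<gamma> \<alpha> \<sigma> :: "nat list"
  assumes "1 \<le> n"
    and "length \<gamma> = n" and "sum_list \<gamma> = m"
    and "length \<alpha> = n" and "sum_list \<alpha> = m"
    and "\<sigma> \<in> permutations_of_set {1..n}"
  shows "(lex_gt (sortp \<gamma>) (sortp \<alpha>) \<longrightarrow> Poly_Mapping.lookup (Emac \<sigma> \<alpha>) (mon_exp \<sigma> \<gamma>) = 0) \<and>
         (sortp \<gamma> = sortp \<alpha> \<and> lex_gt \<gamma> \<alpha> \<longrightarrow> Poly_Mapping.lookup (Emac \<sigma> \<alpha>) (mon_exp \<sigma> \<gamma>) = 0) \<and>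
         (\<gamma> = \<alpha> \<longrightarrow> Poly_Mapping.lookup (Emac \<sigma> \<alpha>) (mon_exp \<sigma> \<gamma>) = 1)"
proof -
  interpret basement_perm \<sigma> \<alpha>
    using assms(4,6) by unfold_locales (auto dest: permutations_of_setD)
  have "length \<gamma> = length \<alpha>" using assms(2,4) by simp
  then show ?thesis
    using lookup_Emac_eq_0_if_lex_gt_sortp lookup_Emac_eq_0_if_lex_gt lookup_Emac_mon_exp_self
    by blast
qed

end
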